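(* Let $\bar F^a,\bar F^b:\mathbb{R}^n\times(0,\infty)\to\mathbb{R}^n$ be closed-loop discrete-time models and suppose that $\bar F^a$ is EPC with $\bar F^b$. Then: (i) $\bar F^a$ is SPS-VSR if and only if $\bar F^b$ is SPS-VSR; (ii) $\bar F^a$ is LES-VSR if and only if $\bar F^b$ is LES-VSR; (iii) $\bar F^a$ is SLES-VSR if and only if $\bar F^b$ is SLES-VSR.
   Context: A closed-loop discrete-time (DT) model is a map $\bar F:\mathbb{R}^n\times(0,\infty)\to\mathbb{R}^n$; its solutions under a sampling-period sequence $\{T_i\}_{i=0}^\infty$ are given by $x_{k+1}=\bar F(x_k,T_k)$, $k\in\mathbb{N}_0$. For $T>0$, $\Phi(T)$ denotes the set of all sequences $\{T_i\}_{i=0}^\infty$ with $T_i\in(0,T)$ for all $i$; by convention $\sum_{i=0}^{-1}T_i=0$. $|\cdot|$ is the Euclidean norm. $\mathcal{K}$: continuous strictly increasing $\alpha:\mathbb{R}_{\ge0}\to\mathbb{R}_{\ge0}$ with $\alpha(0)=0$; $\mathcal{K}_\infty$: unbounded functions in $\mathcal{K}$; $\mathcal{KL}$: $\beta:\mathbb{R}_{\ge0}^2\to\mathbb{R}_{\ge0}$ with $\beta(\cdot,t)\in\mathcal{K}$ for each $t$ and $\beta(s,\cdot)$ strictly decreasing to $0$ for each $s$. EPC: $\bar F^a$ is Equilibrium-Preserving Consistent (EPC) with $\bar F^b$ if for each $M\ge0$ there exist $K=K(M)>0$, $T^*=T^*(M)>0$ and $\rho\in\mathcal{K}_\infty$ such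 that $|\bar F^a(x,T)-\bar F^b(y,T)|\le(1+KT)|x-y|+T\rho(T)\max\{|x|,|y|\}$ for all $|x|,|y|\le M$ and $T\in(0,T^* )$. SPS-VSR: there exists $\beta\in\mathcal{KL}$ such that for every $M\ge0$ and $R>0$ there exists $T^\star=T^\star(M,R)>0$ such that for all $k\in\mathbb{N}_0$, $\{T_i\}\in\Phi(T^\star)$ and $|x_0|\le M$, the solutions satisfy $|x_k|\le\beta(|x_0|,\sum_{i=0}^{k-1}T_i)+R$. LES-VSR: there exist $K\ge1$ and $R,T^\star,\lambda>0$ such that for all $k\in\mathbb{N}_0$, $\{T_i\}\in\Phi(T^\star)$ and $|x_0|\le R$, the solutions satisfy $|x_k|\le K|x_0|e^{-\lambda\sum_{i=0}^{k-1}T_i}$. SLES-VSR: both SPS-VSR and LES-VSR. *)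

theory Defs
  imports "HOL-Analysis.Analysis"
begin

text \<open>Comparison function classes; only the values on the nonnegative reals matter.\<close>

definition class_K :: "(real \<Rightarrow> real) \<Rightarrow> bool" where
  "class_K \<alpha> \<longleftrightarrow> continuous_on {0..} \<alpha> \<and> strict_mono_on {0..} \<alpha> \<and> \<alpha> 0 = 0"

definition class_K_inf :: "(real \<Rightarrow> real) \<Rightarrow> bool" where
  "class_K_inf \<alpha> \<longleftrightarrow> class_K \<alpha> \<and> (\<forall>r. \<exists>s\<ge>0. \<alpha> s > r)"

definition class_KL :: "(real \<Rightarrow> real \<Rightarrow> real) \<Rightarrow> bool" where
  "class_KL \<beta> \<longleftrightarrow>
     (\<forall>t\<ge>0. class_K (\<lambda>s. \<beta> s t)) \<and>
     (\<forall>s>0. (\<forall>t1\<ge>0. \<forall>t2. t1 < t2 \<longrightarrow> \<beta> s t2 < \<beta> s t1) \<and>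
            ((\<lambda>t. \<beta> s t) \<longlongrightarrow> 0) at_top)"

primrec dt_sol :: "('a \<Rightarrow> real \<Rightarrow> 'a) \<Rightarrow> 'a \<Rightarrow> (nat \<Rightarrow> real) \<Rightarrow> nat \<Rightarrow> 'a" where
  "dt_sol F x0 Ts 0 = x0"
| "dt_sol F x0 Ts (Suc k) = F (dt_sol F x0 Ts k) (Ts k)"

definition Phi :: "real \<Rightarrow> (nat \<Rightarrow> real) set" where
  "Phi T = {Ts. \<forall>i. 0 < Ts i \<and> Ts i < T}"

definition EPC :: "(real^'n \<Rightarrow> real \<Rightarrow> real^'n) \<Rightarrow> (real^'n \<Rightarrow> real \<Rightarrow> real^'n) \<Rightarrow> bool" where
  "EPC Fa Fb \<longleftrightarrow> (\<forall>M\<ge>0. \<exists>K>0. \<exists>Tst>0. \<exists>\<rho>. class_K_inf \<rho> \<and>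
      (\<forall>x y T. norm x \<le> M \<longrightarrow> norm y \<le> M \<longrightarrow> 0 < T \<longrightarrow> T < Tst \<longrightarrow>
         norm (Fa x T - Fb y T) \<le> (1 + K * T) * norm (x - y) + T * \<rho> T * max (norm x) (norm y)))"

definition SPS_VSR :: "(real^'n \<Rightarrow> real \<Rightarrow> real^'n) \<Rightarrow> bool" where
  "SPS_VSR F \<longleftrightarrow> (\<exists>\<beta>. class_KL \<beta> \<and>
     (\<forall>M\<ge>0. \<forall>R>0. \<exists>Tst>0. \<forall>k Ts x0. Ts \<in> Phi Tst \<longrightarrow> norm x0 \<le> M \<longrightarrow>
        norm (dt_sol F x0 Ts k) \<le> \<beta> (norm x0) (\<Sum>i<k. Ts i) + R))"

definition LES_VSR :: "(real^'n \<Rightarrow> real \<Rightarrow> real^'n) \<Rightarrow> bool" where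
  "LES_VSR F \<longleftrightarrow> (\<exists>K\<ge>1. \<exists>R>0. \<exists>Tst>0. \<exists>lam>0. \<forall>k Ts x0.
     Ts \<in> Phi Tst \<longrightarrow> norm x0 \<le> R \<longrightarrow>
       norm (dt_sol F x0 Ts k) \<le> K * norm x0 * exp (- lam * (\<Sum>i<k. Ts i)))"

definition SLES_VSR :: "(real^'n \<Rightarrow> real \<Rightarrow> real^'n) \<Rightarrow> bool" where
  "SLES_VSR F \<longleftrightarrow> SPS_VSR F \<and> LES_VSR F"

end

theory Submission
  imports Defs
begin

text \<open>Over a fixed time horizon, EPC and a discrete Gronwall estimate show that an
  \<open>F\<^sup>a\<close>-solution and the \<open>F\<^sup>b\<close>-solution from the same initial state differ by an
  arbitrarily small fraction of a bound on the latter, provided all sampling periods are small.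
  To reach infinite time, the comparison is restarted: time is cut into windows of duration
  between \<open>\<tau>\<close> and \<open>2\<tau>\<close>, and \<open>\<tau>\<close> is chosen so large that the stability bound of \<open>F\<^sup>b\<close> has
  decayed enough over one window to bring the \<open>F\<^sup>a\<close>-solution back into the region where the
  comparison applies again (a small ball for SPS, a halving of the norm for LES).
  Since EPC is symmetric, this transfers each property in both directions.\<close>

lemma class_K_small_near_zero:
  assumes "class_K \<alpha>" and "\<epsilon> > 0"
  obtains \<delta> where "\<delta> > 0" and "\<And>s. 0 \<le> s \<Longrightarrow> s < \<delta> \<Longrightarrow> \<alpha> s < \<epsilon>"
proof -
  have "continuous_on {0..} \<alpha>" and "\<alpha> 0 = 0"
    using assms(1) by (auto simp: class_K_def)
  then obtain d where "d > 0" and "\<forall>s\<in>{0..}. dist s 0 < d \<longrightarrow> dist (\<alpha> s) (\<alpha> 0) < \<epsilon>"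
    using assms(2) unfolding continuous_on_iff by (meson atLeast_iff order_refl)
  with \<open>\<alpha> 0 = 0\<close> show ?thesis
    by (intro that[of d]) (auto simp: dist_real_def)
qed

lemma class_KL_zero: "class_KL \<beta> \<Longrightarrow> 0 \<le> t \<Longrightarrow> \<beta> 0 t = 0"
  by (auto simp: class_KL_def class_K_def)

lemma class_KL_mono:
  assumes "class_KL \<beta>" "0 \<le> s1" "s1 \<le> s2" "0 \<le> t"
  shows "\<beta> s1 t \<le> \<beta> s2 t"
proof -
  have "strict_mono_on {0..} (\<lambda>s. \<beta> s t)"
    using assms by (auto simp: class_KL_def class_K_def)
  with assms show ?thesis
    by (cases "s1 = s2") (auto simp: strict_mono_on_def intro: less_imp_le)
qed

lemma class_KL_nonneg: "class_KL \<beta> \<Longrightarrow> 0 \<le> s \<Longrightarrow> 0 \<le> t \<Longrightarrow> 0 \<le> \<beta> s t"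
  using class_KL_mono[of \<beta> 0 s t] class_KL_zero[of \<beta> t] by simp

lemma class_KL_antimono:
  assumes "class_KL \<beta>" "0 \<le> s" "0 \<le> t1" "t1 \<le> t2"
  shows "\<beta> s t2 \<le> \<beta> s t1"
proof (cases "s = 0")
  case True
  with assms show ?thesis by (simp add: class_KL_zero)
next
  case False
  with assms show ?thesis
    unfolding class_KL_def by (cases "t1 = t2") (auto intro: less_imp_le)
qed

lemma class_KL_eventually_le:
  assumes "class_KL \<beta>" "s > 0" "\<epsilon> > 0"
  obtains \<tau> where "\<tau> > 0" and "\<beta> s \<tau> \<le> \<epsilon>"
proof -
  have "((\<lambda>t. \<beta> s t) \<longlongrightarrow> 0) at_top"
    using assms by (simp add: class_KL_def)
  then have "eventually (\<lambda>t. dist (\<beta> s t) 0 < \<epsilon>) at_top"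
    using assms(3) by (simp add: tendsto_iff)
  then obtain t0 where "\<And>t. t \<ge> t0 \<Longrightarrow> dist (\<beta> s t) 0 < \<epsilon>"
    by (auto simp: eventually_at_top_linorder)
  from this[of "max t0 1"] show ?thesis
    by (intro that[of "max t0 1"]) (auto simp: dist_real_def)
qed

lemma dt_sol_add: "dt_sol F x0 Ts (m + j) = dt_sol F (dt_sol F x0 Ts m) (\<lambda>i. Ts (m + i)) j"
  by (induction j) auto

lemma sum_lessThan_add:
  fixes f :: "nat \<Rightarrow> 'a::comm_monoid_add"
  shows "(\<Sum>i<m + j. f i) = (\<Sum>i<m. f i) + (\<Sum>i<j. f (m + i))"
  by (induction j) (auto simp: add.assoc)

lemma Phi_shift: "Ts \<in> Phi T \<Longrightarrow> (\<lambda>i. Ts (m + i)) \<in> Phi T"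
  by (simp add: Phi_def)

lemma Phi_mono: "Ts \<in> Phi T \<Longrightarrow> T \<le> T' \<Longrightarrow> Ts \<in> Phi T'"
  by (auto simp: Phi_def intro: less_le_trans)

lemma EPC_sym:
  assumes "EPC Fa Fb"
  shows "EPC Fb Fa"
  unfolding EPC_def
proof (intro allI impI)
  fix M :: real
  assume "M \<ge> 0"
  then obtain K Tst \<rho> where "K > 0" "Tst > 0" "class_K_inf \<rho>" and
    ineq: "\<And>x y T. norm x \<le> M \<Longrightarrow> norm y \<le> M \<Longrightarrow> 0 < T \<Longrightarrow> T < Tst \<Longrightarrow>
      norm (Fa x T - Fb y T) \<le> (1 + K * T) * norm (x - y) + T * \<rho> T * max (norm x) (norm y)"
    using assms unfolding EPC_def by metis
  have "norm (Fb x T - Fa y T) \<le> (1 + K * T) * norm (x - y) + T * \<rho> T * max (norm x) (norm y)"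
    if "norm x \<le> M" "norm y \<le> M" "0 < T" "T < Tst" for x y T
    using ineq[OF that(2,1,3,4)] by (simp add: norm_minus_commute max.commute)
  with \<open>K > 0\<close> \<open>Tst > 0\<close> \<open>class_K_inf \<rho>\<close>
  show "\<exists>K>0. \<exists>Tst>0. \<exists>\<rho>. class_K_inf \<rho> \<and> (\<forall>x y T. norm x \<le> M \<longrightarrow> norm y \<le> M \<longrightarrow>
      0 < T \<longrightarrow> T < Tst \<longrightarrow>
      norm (Fb x T - Fa y T) \<le> (1 + K * T) * norm (x - y) + T * \<rho> T * max (norm x) (norm y))"
    by blast
qed

lemma discrete_gronwall_step:
  fixes K c t T e :: real
  assumes "0 \<le> K" "0 \<le> c" "0 \<le> t" "0 \<le> T" and e: "e \<le> c * t * exp (K * t)"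
  shows "(1 + K * T) * e + T * c \<le> c * (t + T) * exp (K * (t + T))"
proof -
  have "(1 + K * T) * e \<le> (1 + K * T) * (c * t * exp (K * t))"
    using assms by (intro mult_left_mono) auto
  also have "\<dots> \<le> exp (K * T) * (c * t * exp (K * t))"
    using assms by (intro mult_right_mono) (auto simp: exp_ge_add_one_self)
  also have "\<dots> = c * t * exp (K * (t + T))"
    by (simp add: distrib_left exp_add)
  finally have "(1 + K * T) * e \<le> c * t * exp (K * (t + T))" .
  moreover have "T * c * 1 \<le> T * c * exp (K * (t + T))"
    using assms by (intro mult_left_mono) auto
  ultimately show ?thesis
    by (simp add: algebra_simps)
qed

text \<open>The deviation is controlled as long as it stays below \<open>D\<close>, which keeps the
  \<open>F\<^sup>a\<close>-solution inside the ball of radius \<open>B + D\<close> where the EPC inequality is available;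
  the hypothesis \<open>small\<close> guarantees this up to time \<open>h\<close>.\<close>
lemma dt_sol_deviation_le:
  fixes Fa Fb :: "'a::real_normed_vector \<Rightarrow> real \<Rightarrow> 'a"
  assumes K: "0 \<le> K" and \<rho>0: "0 \<le> \<rho>0" and B: "0 \<le> B" and D: "0 \<le> D"
    and epc: "\<And>x y T. norm x \<le> B + D \<Longrightarrow> norm y \<le> B + D \<Longrightarrow> 0 < T \<Longrightarrow> T < Te \<Longrightarrow>
      norm (Fa x T - Fb y T) \<le> (1 + K * T) * norm (x - y) + T * \<rho> T * max (norm x) (norm y)"
    and Ts: "\<And>i. 0 < Ts i" "\<And>i. Ts i < Te" "\<And>i. \<rho> (Ts i) \<le> \<rho>0"
    and bounded: "\<And>k. norm (dt_sol Fb x0 Ts k) \<le> B"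
    and small: "\<rho>0 * (B + D) * h * exp (K * h) \<le> D"
    and horizon: "(\<Sum>i<k. Ts i) \<le> h"
  shows "norm (dt_sol Fa x0 Ts k - dt_sol Fb x0 Ts k)
           \<le> \<rho>0 * (B + D) * (\<Sum>i<k. Ts i) * exp (K * (\<Sum>i<k. Ts i))"
  using horizon
proof (induction k)
  case 0
  then show ?case by simp
next
  case (Suc k)
  define t where "t = (\<Sum>i<k. Ts i)"
  define c where "c = \<rho>0 * (B + D)"
  let ?xa = "dt_sol Fa x0 Ts k" and ?xb = "dt_sol Fb x0 Ts k"
  have c: "0 \<le> c" using \<rho>0 B D by (simp add: c_def)
  have t: "0 \<le> t" unfolding t_def using Ts(1) by (simp add: less_imp_le sum_nonneg)
  have th: "t \<le> h" using Suc.prems Ts(1)[of k] by (simp add: t_def)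
  have IH: "norm (?xa - ?xb) \<le> c * t * exp (K * t)"
    using Suc.IH th by (simp add: c_def t_def)
  also have "\<dots> \<le> c * h * exp (K * h)"
    using c t th K by (intro mult_mono) (auto intro: mult_left_mono)
  finally have "norm (?xa - ?xb) \<le> D"
    using small by (simp add: c_def)
  then have xa: "norm ?xa \<le> B + D" and xb: "norm ?xb \<le> B + D"
    using norm_triangle_sub[of ?xa ?xb] bounded[of k] D by auto
  have "\<rho> (Ts k) * max (norm ?xa) (norm ?xb) \<le> \<rho>0 * (B + D)"
    using Ts(3)[of k] \<rho>0 xa xb by (intro mult_mono) (auto simp: le_max_iff_disj)
  then have "Ts k * \<rho> (Ts k) * max (norm ?xa) (norm ?xb) \<le> Ts k * c"
    using Ts(1)[of k] by (simp add: c_def mult.assoc)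
  then have "norm (dt_sol Fa x0 Ts (Suc k) - dt_sol Fb x0 Ts (Suc k))
      \<le> (1 + K * Ts k) * norm (?xa - ?xb) + Ts k * c"
    using epc[OF xa xb Ts(1)[of k] Ts(2)[of k]] by simp
  also have "\<dots> \<le> c * (t + Ts k) * exp (K * (t + Ts k))"
    using discrete_gronwall_step[OF K c t _ IH] Ts(1)[of k] by simp
  finally show ?case
    by (simp add: t_def c_def)
qed

lemma EPC_solutions_close:
  fixes Fa Fb :: "real^'n \<Rightarrow> real \<Rightarrow> real^'n"
  assumes epc: "EPC Fa Fb" and B0: "0 \<le> B0" and \<delta>: "\<delta> > 0" and h: "h > 0"
  obtains T where "T > 0" and
    "\<And>Ts x0 B k. Ts \<in> Phi T \<Longrightarrow> 0 \<le> B \<Longrightarrow> B \<le> B0 \<Longrightarrow>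
       (\<And>j. norm (dt_sol Fb x0 Ts j) \<le> B) \<Longrightarrow> (\<Sum>i<k. Ts i) \<le> h \<Longrightarrow>
       norm (dt_sol Fa x0 Ts k - dt_sol Fb x0 Ts k) \<le> \<delta> * B"
proof -
  obtain K Te \<rho> where K: "K > 0" and Te: "Te > 0" and "class_K_inf \<rho>" and
    ineq: "\<And>x y T. norm x \<le> (1 + \<delta>) * B0 \<Longrightarrow> norm y \<le> (1 + \<delta>) * B0 \<Longrightarrow> 0 < T \<Longrightarrow> T < Te \<Longrightarrow>
      norm (Fa x T - Fb y T) \<le> (1 + K * T) * norm (x - y) + T * \<rho> T * max (norm x) (norm y)"
    using epc B0 \<delta> unfolding EPC_def by (metis less_imp_le mult_nonneg_nonneg add_nonneg_pos zero_less_one)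
  define \<rho>0 where "\<rho>0 = \<delta> / ((1 + \<delta>) * h * exp (K * h))"
  have \<rho>0: "\<rho>0 > 0" and \<rho>0_eq: "\<rho>0 * (1 + \<delta>) * h * exp (K * h) = \<delta>"
    using \<delta> h by (simp_all add: \<rho>0_def)
  obtain Tr where Tr: "Tr > 0" and \<rho>_small: "\<And>T. 0 \<le> T \<Longrightarrow> T < Tr \<Longrightarrow> \<rho> T < \<rho>0"
    using class_K_small_near_zero[of \<rho> \<rho>0] \<open>class_K_inf \<rho>\<close> \<rho>0 by (auto simp: class_K_inf_def)
  show ?thesis
  proof (rule that[of "min Te Tr"])
    fix Ts x0 B k
    assume Ts: "Ts \<in> Phi (min Te Tr)" and B: "0 \<le> B" "B \<le> B0"
      and bounded: "\<And>j. norm (dt_sol Fb x0 Ts j) \<le> B" and horizon: "(\<Sum>i<k. Ts i) \<le> h"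
    let ?s = "\<Sum>i<k. Ts i"
    have small: "\<rho>0 * (B + \<delta> * B) * h * exp (K * h) = \<delta> * B"
    proof -
      have "\<rho>0 * (B + \<delta> * B) * h * exp (K * h) = B * (\<rho>0 * (1 + \<delta>) * h * exp (K * h))"
        by (simp add: algebra_simps)
      then show ?thesis using \<rho>0_eq by simp
    qed
    have "(1 + \<delta>) * B \<le> (1 + \<delta>) * B0" using B \<delta> by simp
    then have "norm (dt_sol Fa x0 Ts k - dt_sol Fb x0 Ts k) \<le> \<rho>0 * (B + \<delta> * B) * ?s * exp (K * ?s)"
      using Ts \<rho>0 B \<delta> K bounded horizon \<rho>_small small
      by (intro dt_sol_deviation_le[where Te = Te and \<rho> = \<rho> and h = h] ineq)
        (auto simp: Phi_def algebra_simps less_imp_le)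
    also have "\<dots> \<le> \<rho>0 * (B + \<delta> * B) * h * exp (K * h)"
      using \<rho>0 B \<delta> K h horizon Ts
      by (intro mult_mono) (auto simp: Phi_def less_imp_le intro!: sum_nonneg mult_left_mono)
    finally show "norm (dt_sol Fa x0 Ts k - dt_sol Fb x0 Ts k) \<le> \<delta> * B"
      using small by simp
  qed (use Te Tr in simp)
qed

lemma EPC_window_bound:
  fixes Fa Fb :: "real^'n \<Rightarrow> real \<Rightarrow> real^'n"
  assumes epc: "EPC Fa Fb" and "0 < Tb" "0 \<le> B0" "0 < \<delta>" "0 < h"
    and Fb_bound: "\<And>Ts x0 k. Ts \<in> Phi Tb \<Longrightarrow> norm x0 \<le> r \<Longrightarrow>
      norm (dt_sol Fb x0 Ts k) \<le> g (norm x0) (\<Sum>i<k. Ts i)"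
    and g_le: "\<And>s t. 0 \<le> s \<Longrightarrow> s \<le> r \<Longrightarrow> 0 \<le> t \<Longrightarrow> g s t \<le> b s"
    and b: "\<And>s. 0 \<le> s \<Longrightarrow> s \<le> r \<Longrightarrow> 0 \<le> b s \<and> b s \<le> B0"
  obtains T where "0 < T" and
    "\<And>Ts x0 k. Ts \<in> Phi T \<Longrightarrow> norm x0 \<le> r \<Longrightarrow> (\<Sum>i<k. Ts i) \<le> h \<Longrightarrow>
      norm (dt_sol Fa x0 Ts k) \<le> g (norm x0) (\<Sum>i<k. Ts i) + \<delta> * b (norm x0)"
proof -
  obtain T where "0 < T" and close: "\<And>Ts x0 B k. Ts \<in> Phi T \<Longrightarrow> 0 \<le> B \<Longrightarrow> B \<le> B0 \<Longrightarrow>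
      (\<And>j. norm (dt_sol Fb x0 Ts j) \<le> B) \<Longrightarrow> (\<Sum>i<k. Ts i) \<le> h \<Longrightarrow>
      norm (dt_sol Fa x0 Ts k - dt_sol Fb x0 Ts k) \<le> \<delta> * B"
    using EPC_solutions_close[OF epc \<open>0 \<le> B0\<close> \<open>0 < \<delta>\<close> \<open>0 < h\<close>] by blast
  show ?thesis
  proof (rule that[of "min Tb T"])
    fix Ts and x0 :: "real^'n" and k
    assume Ts: "Ts \<in> Phi (min Tb T)" and x0: "norm x0 \<le> r" and horizon: "(\<Sum>i<k. Ts i) \<le> h"
    then have "Ts \<in> Phi Tb" "Ts \<in> Phi T"
      using Phi_mono by auto
    have Fb_le: "norm (dt_sol Fb x0 Ts j) \<le> b (norm x0)" for j
    proof -
      have "0 \<le> (\<Sum>i<j. Ts i)"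
        using \<open>Ts \<in> Phi T\<close> by (auto simp: Phi_def less_imp_le intro: sum_nonneg)
      then show ?thesis
        using Fb_bound[OF \<open>Ts \<in> Phi Tb\<close> x0, of j] g_le[OF norm_ge_zero x0] by (meson order_trans)
    qed
    have "norm (dt_sol Fa x0 Ts k - dt_sol Fb x0 Ts k) \<le> \<delta> * b (norm x0)"
      using close[OF \<open>Ts \<in> Phi T\<close> _ _ Fb_le horizon] b[OF norm_ge_zero x0] by blast
    then show "norm (dt_sol Fa x0 Ts k) \<le> g (norm x0) (\<Sum>i<k. Ts i) + \<delta> * b (norm x0)"
      using norm_triangle_sub[of "dt_sol Fa x0 Ts k" "dt_sol Fb x0 Ts k"]
        Fb_bound[OF \<open>Ts \<in> Phi Tb\<close> x0, of k] by simp
  qed (use \<open>0 < Tb\<close> \<open>0 < T\<close> in simp)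
qed

lemma exp_ln2_rate_le:
  fixes h s t :: real
  assumes "h > 0" "0 \<le> s" "s \<le> h"
  shows "exp (- (ln 2 / h) * t) \<le> 2 * exp (- (ln 2 / h) * (t + s))"
proof -
  have "ln 2 / h * s \<le> ln 2 / h * h"
    using assms by (intro mult_left_mono) auto
  then have "exp (ln 2 / h * s) \<le> exp (ln 2 / h * h)"
    by simp
  also have "\<dots> = 2"
    using assms(1) by simp
  finally have "exp (- (ln 2 / h) * (t + s)) * exp (ln 2 / h * s) \<le> exp (- (ln 2 / h) * (t + s)) * 2"
    by (intro mult_left_mono) auto
  moreover have "- (ln 2 / h) * t = - (ln 2 / h) * (t + s) + ln 2 / h * s"
    by (simp add: algebra_simps add_divide_distrib)
  ultimately show ?thesis
    by (simp only: exp_add mult.commute)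
qed

text \<open>The first partial sum reaching \<open>\<tau>\<close> is still at most \<open>2\<tau>\<close>, since every step is
  shorter than \<open>\<tau>\<close>; this is the next restart index.\<close>
lemma restart_index_exists:
  fixes Ts :: "nat \<Rightarrow> real"
  assumes pos: "\<And>i. 0 < Ts i" and short: "\<And>i. Ts i < \<tau>"
    and step: "\<And>m j. good m \<Longrightarrow> \<tau> \<le> (\<Sum>i<j. Ts (m + i)) \<Longrightarrow> (\<Sum>i<j. Ts (m + i)) \<le> 2 * \<tau>
      \<Longrightarrow> good (m + j)"
    and "good m"
  shows "\<exists>m'. m \<le> m' \<and> m' \<le> m + d \<and> good m' \<and> (\<Sum>i<m + d - m'. Ts (m' + i)) \<le> 2 * \<tau>"
  using \<open>good m\<close>
proof (induction d arbitrary: m rule: less_induct)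
  case (less d)
  show ?case
  proof (cases "(\<Sum>i<d. Ts (m + i)) \<le> 2 * \<tau>")
    case True
    with less.prems show ?thesis
      by (intro exI[of _ m]) auto
  next
    case False
    define j where "j = (LEAST j. \<tau> \<le> (\<Sum>i<j. Ts (m + i)))"
    have "\<tau> \<le> (\<Sum>i<d. Ts (m + i))"
      using False short[of 0] pos[of 0] by linarith
    then have j_ge: "\<tau> \<le> (\<Sum>i<j. Ts (m + i))" and "j \<le> d"
      unfolding j_def by (auto intro: LeastI Least_le)
    have "j \<noteq> 0"
      using j_ge pos[of 0] short[of 0] by (cases j) auto
    then obtain j' where j': "j = Suc j'"
      by (cases j) auto
    then have "\<not> \<tau> \<le> (\<Sum>i<j'. Ts (m + i))"
      using not_less_Least[of j' "\<lambda>j. \<tau> \<le> (\<Sum>i<j. Ts (m + i))"] by (simp add: j_def)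
    then have j_le: "(\<Sum>i<j. Ts (m + i)) \<le> 2 * \<tau>"
      using j' short[of "m + j'"] by simp
    have "d - j < d"
      using \<open>j \<noteq> 0\<close> \<open>j \<le> d\<close> by simp
    from less.IH[OF this step[OF less.prems j_ge j_le]] obtain m' where
      "m + j \<le> m'" "m' \<le> m + j + (d - j)" "good m'"
      "(\<Sum>i<m + j + (d - j) - m'. Ts (m' + i)) \<le> 2 * \<tau>"
      by blast
    with \<open>j \<le> d\<close> show ?thesis
      by (intro exI[of _ m']) auto
  qed
qed

text \<open>After each window of duration at least \<open>\<tau>\<close> the solution is back in the ball of
  radius \<open>R0\<close>, from which a further window of duration at most \<open>2\<tau>\<close> keeps it within \<open>R\<close>.\<close>
lemma KL_bound_from_windows:
  fixes x :: "nat \<Rightarrow> 'a::real_normed_vector" and Ts :: "nat \<Rightarrow> real"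
  assumes KL: "class_KL \<beta>" and pos: "\<And>i. 0 < Ts i" and short: "\<And>i. Ts i < \<tau>"
    and R0: "0 \<le> R0" "R0 \<le> S" "\<beta> R0 0 + \<epsilon> \<le> R"
    and decay: "\<beta> S \<tau> + \<epsilon> \<le> R0"
    and x0: "norm (x 0) \<le> S"
    and window: "\<And>m j. norm (x m) \<le> S \<Longrightarrow> (\<Sum>i<j. Ts (m + i)) \<le> 2 * \<tau> \<Longrightarrow>
      norm (x (m + j)) \<le> \<beta> (norm (x m)) (\<Sum>i<j. Ts (m + i)) + \<epsilon>"
  shows "norm (x k) \<le> \<beta> (norm (x 0)) (\<Sum>i<k. Ts i) + R"
proof -
  define good where "good m \<longleftrightarrow> m = 0 \<or> norm (x m) \<le> R0" for m
  have good_S: "norm (x m) \<le> S" if "good m" for m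
    using that x0 R0 by (auto simp: good_def)
  have \<tau>: "0 < \<tau>"
    using pos[of 0] short[of 0] by simp
  have "good (m + j)"
    if "good m" and s: "\<tau> \<le> (\<Sum>i<j. Ts (m + i))" "(\<Sum>i<j. Ts (m + i)) \<le> 2 * \<tau>" for m j
  proof -
    have "norm (x (m + j)) \<le> \<beta> (norm (x m)) (\<Sum>i<j. Ts (m + i)) + \<epsilon>"
      using window good_S that by blast
    also have "\<beta> (norm (x m)) (\<Sum>i<j. Ts (m + i)) \<le> \<beta> S (\<Sum>i<j. Ts (m + i))"
      using class_KL_mono[OF KL _ good_S[OF \<open>good m\<close>]] s \<tau> by simp
    also have "\<dots> \<le> \<beta> S \<tau>"
      using class_KL_antimono[OF KL _ _ s(1)] \<tau> R0 by simp
    finally show ?thesis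
      using decay by (simp add: good_def)
  qed
  then obtain m where "m \<le> k" "good m" and s: "(\<Sum>i<k - m. Ts (m + i)) \<le> 2 * \<tau>"
    using restart_index_exists[of Ts \<tau> good 0 k] pos short by (auto simp: good_def)
  let ?s = "\<Sum>i<k - m. Ts (m + i)"
  have s0: "0 \<le> ?s"
    using pos by (simp add: less_imp_le sum_nonneg)
  have xk: "norm (x k) \<le> \<beta> (norm (x m)) ?s + \<epsilon>"
    using window[OF good_S[OF \<open>good m\<close>] s] \<open>m \<le> k\<close> by simp
  have "0 \<le> \<beta> (norm (x 0)) (\<Sum>i<k. Ts i)" "0 \<le> \<beta> R0 0"
    using class_KL_nonneg[OF KL] pos R0 by (auto simp: less_imp_le sum_nonneg)
  moreover have "\<beta> (norm (x m)) ?s \<le> \<beta> R0 0" if "m \<noteq> 0"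
  proof -
    have "\<beta> (norm (x m)) ?s \<le> \<beta> R0 ?s"
      using \<open>good m\<close> that class_KL_mono[OF KL _ _ s0] by (simp add: good_def)
    also have "\<dots> \<le> \<beta> R0 0"
      using class_KL_antimono[OF KL R0(1) _ s0] by simp
    finally show ?thesis .
  qed
  ultimately show ?thesis
    using xk R0 by (cases "m = 0") auto
qed

text \<open>Each window of duration in \<open>[\<tau>, 2\<tau>]\<close> at least halves the norm, so the bound
  \<open>|x m| \<le> |x 0| exp (-\<mu> t\<^sub>m)\<close> with \<open>\<mu> = ln 2 / (2\<tau>)\<close> is restored at every restart index.\<close>
lemma exp_bound_from_windows:
  fixes x :: "nat \<Rightarrow> 'a::real_normed_vector" and Ts :: "nat \<Rightarrow> real"
  assumes pos: "\<And>i. 0 < Ts i" and short: "\<And>i. Ts i < \<tau>"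
    and Kb: "0 \<le> Kb" and lam: "0 \<le> lam" and decay: "Kb * exp (- lam * \<tau>) \<le> 1 / 4"
    and x0: "norm (x 0) \<le> r"
    and window: "\<And>m j. norm (x m) \<le> r \<Longrightarrow> (\<Sum>i<j. Ts (m + i)) \<le> 2 * \<tau> \<Longrightarrow>
      norm (x (m + j)) \<le> Kb * norm (x m) * exp (- lam * (\<Sum>i<j. Ts (m + i))) + norm (x m) / 4"
  shows "norm (x k) \<le> 2 * (Kb + 1) * norm (x 0) * exp (- (ln 2 / (2 * \<tau>)) * (\<Sum>i<k. Ts i))"
proof -
  define \<mu> where "\<mu> = ln 2 / (2 * \<tau>)"
  define good where "good m \<longleftrightarrow> norm (x m) \<le> norm (x 0) * exp (- \<mu> * (\<Sum>i<m. Ts i))" for m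
  have \<tau>: "0 < \<tau>"
    using pos[of 0] short[of 0] by simp
  have sum_nonneg: "0 \<le> (\<Sum>i<j. Ts (m + i))" for m j
    using pos by (simp add: less_imp_le sum_nonneg)
  have good_r: "norm (x m) \<le> r" if "good m" for m
  proof -
    have "exp (- \<mu> * (\<Sum>i<m. Ts i)) \<le> 1"
      using \<tau> sum_nonneg[of 0 m] by (simp add: \<mu>_def)
    then show ?thesis
      using that x0 mult_left_mono[of _ 1 "norm (x 0)"] by (fastforce simp: good_def)
  qed
  have halving: "exp (- \<mu> * (\<Sum>i<m. Ts i)) \<le> 2 * exp (- \<mu> * (\<Sum>i<m + j. Ts i))"
    if "(\<Sum>i<j. Ts (m + i)) \<le> 2 * \<tau>" for m j
    using exp_ln2_rate_le[of "2 * \<tau>"] \<tau> that sum_nonneg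
    by (simp add: \<mu>_def sum_lessThan_add)
  have "good (m + j)"
    if "good m" and s: "\<tau> \<le> (\<Sum>i<j. Ts (m + i))" "(\<Sum>i<j. Ts (m + i)) \<le> 2 * \<tau>" for m j
  proof -
    have "Kb * exp (- lam * (\<Sum>i<j. Ts (m + i))) \<le> Kb * exp (- lam * \<tau>)"
      using Kb lam s(1) by (intro mult_left_mono) (auto intro: mult_left_mono)
    then have "norm (x m) * (Kb * exp (- lam * (\<Sum>i<j. Ts (m + i)))) \<le> norm (x m) * (1 / 4)"
      using decay by (intro mult_left_mono) auto
    then have "norm (x (m + j)) \<le> norm (x m) * (1 / 4) + norm (x m) / 4"
      using window[OF good_r[OF \<open>good m\<close>] s(2)] by (simp add: ac_simps)
    also have "\<dots> \<le> norm (x 0) * exp (- \<mu> * (\<Sum>i<m. Ts i)) / 2"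
      using \<open>good m\<close> by (simp add: good_def)
    also have "\<dots> \<le> norm (x 0) * exp (- \<mu> * (\<Sum>i<m + j. Ts i))"
      using halving[OF s(2)] mult_left_mono[of _ _ "norm (x 0)"] by fastforce
    finally show ?thesis
      by (simp add: good_def)
  qed
  then obtain m where "m \<le> k" "good m" and s: "(\<Sum>i<k - m. Ts (m + i)) \<le> 2 * \<tau>"
    using restart_index_exists[of Ts \<tau> good 0 k] pos short by (auto simp: good_def)
  have "exp (- lam * (\<Sum>i<k - m. Ts (m + i))) \<le> 1"
    using lam sum_nonneg by simp
  then have "Kb * norm (x m) * exp (- lam * (\<Sum>i<k - m. Ts (m + i))) \<le> Kb * norm (x m)"
    using mult_left_mono[of _ 1 "Kb * norm (x m)"] Kb by simp
  moreover have "norm (x k) \<le> Kb * norm (x m) * exp (- lam * (\<Sum>i<k - m. Ts (m + i))) + norm (x m) / 4"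
    using window[OF good_r[OF \<open>good m\<close>] s] \<open>m \<le> k\<close> by simp
  ultimately have "norm (x k) \<le> (Kb + 1) * norm (x m)"
    unfolding distrib_right mult_1_left using norm_ge_zero[of "x m"] by linarith
  also have "\<dots> \<le> (Kb + 1) * (norm (x 0) * (2 * exp (- \<mu> * (\<Sum>i<k. Ts i))))"
  proof (intro mult_left_mono)
    have "norm (x 0) * exp (- \<mu> * (\<Sum>i<m. Ts i)) \<le> norm (x 0) * (2 * exp (- \<mu> * (\<Sum>i<k. Ts i)))"
      using halving[OF s] \<open>m \<le> k\<close> by (intro mult_left_mono) auto
    with \<open>good m\<close> show "norm (x m) \<le> norm (x 0) * (2 * exp (- \<mu> * (\<Sum>i<k. Ts i)))"
      by (simp add: good_def)
  qed (use Kb in simp)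
  finally show ?thesis
    by (simp add: \<mu>_def algebra_simps)
qed

lemma exp_decay_le_quarter:
  fixes K lam :: real
  assumes "0 < K" "0 < lam"
  obtains \<tau> where "0 < \<tau>" "K * exp (- lam * \<tau>) \<le> 1 / 4"
proof -
  define \<tau> where "\<tau> = max 1 (ln (4 * K) / lam)"
  have "ln (4 * K) / lam \<le> \<tau>"
    by (simp add: \<tau>_def)
  then have "ln (4 * K) \<le> lam * \<tau>"
    using assms by (simp add: pos_divide_le_eq mult.commute)
  then have "exp (ln (4 * K)) \<le> exp (lam * \<tau>)"
    by simp
  then have "4 * K \<le> exp (lam * \<tau>)"
    using assms by simp
  then show ?thesis
    by (intro that[of \<tau>]) (auto simp: \<tau>_def exp_minus field_simps)
qed

lemma class_KL_restart_parameters: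
  assumes KL: "class_KL \<beta>" and "0 \<le> M" "0 < R"
  obtains R0 S \<epsilon> \<tau> where "0 < R0" "R0 \<le> S" "M \<le> S" "0 < \<epsilon>" "0 < \<tau>"
    "\<beta> R0 0 + \<epsilon> \<le> R" "\<beta> S \<tau> + \<epsilon> \<le> R0"
proof -
  obtain \<delta> where "\<delta> > 0" and "\<And>s. 0 \<le> s \<Longrightarrow> s < \<delta> \<Longrightarrow> \<beta> s 0 < R / 2"
    using class_K_small_near_zero[of "\<lambda>s. \<beta> s 0" "R / 2"] KL \<open>0 < R\<close>
    by (auto simp: class_KL_def)
  then have R0: "0 < \<delta> / 2" "\<beta> (\<delta> / 2) 0 < R / 2"
    by auto
  have S: "0 < max M (\<delta> / 2)"
    using R0 by auto
  obtain \<tau> where "0 < \<tau>" "\<beta> (max M (\<delta> / 2)) \<tau> \<le> \<delta> / 4"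
    using class_KL_eventually_le[OF KL S, of "\<delta> / 4"] R0 by auto
  with R0 \<open>0 < R\<close> show ?thesis
    by (intro that[of "\<delta> / 2" "max M (\<delta> / 2)" "min (R / 2) (\<delta> / 4)" \<tau>]) auto
qed

lemma SPS_VSR_transfer:
  fixes Fa Fb :: "real^'n \<Rightarrow> real \<Rightarrow> real^'n"
  assumes epc: "EPC Fa Fb" and "SPS_VSR Fb"
  shows "SPS_VSR Fa"
proof -
  obtain \<beta> where KL: "class_KL \<beta>" and Fb_bound: "\<And>M R. 0 \<le> M \<Longrightarrow> 0 < R \<Longrightarrow>
      \<exists>Tst>0. \<forall>k Ts x0. Ts \<in> Phi Tst \<longrightarrow> norm x0 \<le> M \<longrightarrow>
        norm (dt_sol Fb x0 Ts k) \<le> \<beta> (norm x0) (\<Sum>i<k. Ts i) + R"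
    using \<open>SPS_VSR Fb\<close> unfolding SPS_VSR_def by blast
  have "\<exists>Tst>0. \<forall>k Ts x0. Ts \<in> Phi Tst \<longrightarrow> norm x0 \<le> M \<longrightarrow>
      norm (dt_sol Fa x0 Ts k) \<le> \<beta> (norm x0) (\<Sum>i<k. Ts i) + R" if "0 \<le> M" "0 < R" for M R
  proof -
    obtain R0 S \<epsilon> \<tau> where R0: "0 < R0" "R0 \<le> S" "M \<le> S" "0 < \<epsilon>" "0 < \<tau>"
      "\<beta> R0 0 + \<epsilon> \<le> R" "\<beta> S \<tau> + \<epsilon> \<le> R0"
      using class_KL_restart_parameters[OF KL \<open>0 \<le> M\<close> \<open>0 < R\<close>] .
    obtain Tb where "0 < Tb" and Fb_S: "\<And>k Ts x0. Ts \<in> Phi Tb \<Longrightarrow> norm x0 \<le> S \<Longrightarrow>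
        norm (dt_sol Fb x0 Ts k) \<le> \<beta> (norm x0) (\<Sum>i<k. Ts i) + \<epsilon> / 2"
      using Fb_bound[of S "\<epsilon> / 2"] R0 by auto
    define B where "B = \<beta> S 0 + \<epsilon> / 2"
    have B: "0 < B"
      using class_KL_nonneg[OF KL, of S 0] R0 by (simp add: B_def)
    have g_le: "\<beta> s t + \<epsilon> / 2 \<le> B" if "0 \<le> s" "s \<le> S" "0 \<le> t" for s t
    proof -
      have "\<beta> s t \<le> \<beta> S t" "\<beta> S t \<le> \<beta> S 0"
        using class_KL_mono[OF KL that] class_KL_antimono[OF KL _ order_refl that(3), of S] that
        by simp_all
      then show ?thesis
        by (simp add: B_def)
    qed
    have "0 \<le> B \<and> B \<le> B" "0 < \<epsilon> / (2 * B)" "0 < 2 * \<tau>"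
      using B R0 by auto
    from EPC_window_bound[where r = S and g = "\<lambda>s t. \<beta> s t + \<epsilon> / 2" and b = "\<lambda>_. B",
        OF epc \<open>0 < Tb\<close> less_imp_le[OF B] this(2,3) Fb_S g_le this(1)]
    obtain T where "0 < T" and window: "\<And>Ts x0 k. Ts \<in> Phi T \<Longrightarrow> norm x0 \<le> S \<Longrightarrow>
        (\<Sum>i<k. Ts i) \<le> 2 * \<tau> \<Longrightarrow>
        norm (dt_sol Fa x0 Ts k) \<le> \<beta> (norm x0) (\<Sum>i<k. Ts i) + \<epsilon> / 2 + \<epsilon> / (2 * B) * B"
      by blast
    show ?thesis
    proof (intro exI[of _ "min T \<tau>"] conjI allI impI)
      fix k Ts and x0 :: "real^'n"
      assume Ts: "Ts \<in> Phi (min T \<tau>)" and "norm x0 \<le> M"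
      have pos: "\<And>i. 0 < Ts i" and short: "\<And>i. Ts i < \<tau>" and "Ts \<in> Phi T"
        using Ts by (auto simp: Phi_def)
      have restart: "norm (dt_sol Fa x0 Ts (m + j))
          \<le> \<beta> (norm (dt_sol Fa x0 Ts m)) (\<Sum>i<j. Ts (m + i)) + \<epsilon>"
        if "norm (dt_sol Fa x0 Ts m) \<le> S" "(\<Sum>i<j. Ts (m + i)) \<le> 2 * \<tau>" for m j
        using window[OF Phi_shift[OF \<open>Ts \<in> Phi T\<close>] that] B by (simp add: dt_sol_add)
      have "norm (dt_sol Fa x0 Ts k) \<le> \<beta> (norm (dt_sol Fa x0 Ts 0)) (\<Sum>i<k. Ts i) + R"
        by (rule KL_bound_from_windows[where x = "dt_sol Fa x0 Ts" and S = S, OF KL pos short])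
          (use restart R0 \<open>norm x0 \<le> M\<close> in auto)
      then show "norm (dt_sol Fa x0 Ts k) \<le> \<beta> (norm x0) (\<Sum>i<k. Ts i) + R"
        by simp
    qed (use \<open>0 < T\<close> \<open>0 < \<tau>\<close> in simp)
  qed
  with KL show ?thesis
    unfolding SPS_VSR_def by blast
qed

lemma LES_VSR_transfer:
  fixes Fa Fb :: "real^'n \<Rightarrow> real \<Rightarrow> real^'n"
  assumes epc: "EPC Fa Fb" and "LES_VSR Fb"
  shows "LES_VSR Fa"
proof -
  obtain Kb Rb Tb lam where Kb: "1 \<le> Kb" and "0 < Rb" "0 < Tb" and lam: "0 < lam"
    and Fb_bound: "\<And>k Ts x0. Ts \<in> Phi Tb \<Longrightarrow> norm x0 \<le> Rb \<Longrightarrow>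
       norm (dt_sol Fb x0 Ts k) \<le> Kb * norm x0 * exp (- lam * (\<Sum>i<k. Ts i))"
    using \<open>LES_VSR Fb\<close> unfolding LES_VSR_def by blast
  have "0 < Kb"
    using Kb by simp
  obtain \<tau> where \<tau>: "0 < \<tau>" and decay: "Kb * exp (- lam * \<tau>) \<le> 1 / 4"
    by (rule exp_decay_le_quarter[OF \<open>0 < Kb\<close> lam])
  have g_le: "Kb * s * exp (- lam * t) \<le> Kb * s" if "0 \<le> s" "0 \<le> t" for s t
    using mult_left_mono[of "exp (- lam * t)" 1 "Kb * s"] that Kb lam by simp
  have b: "0 \<le> Kb * s \<and> Kb * s \<le> Kb * Rb" if "0 \<le> s" "s \<le> Rb" for s
    using that Kb by simp
  have "0 \<le> Kb * Rb" "0 < 1 / (4 * Kb)" "0 < 2 * \<tau>"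
    using Kb \<open>0 < Rb\<close> \<tau> by auto
  from EPC_window_bound[where r = Rb and g = "\<lambda>s t. Kb * s * exp (- lam * t)" and b = "\<lambda>s. Kb * s",
      OF epc \<open>0 < Tb\<close> this Fb_bound g_le b]
  obtain T where "0 < T" and window: "\<And>Ts x0 k. Ts \<in> Phi T \<Longrightarrow>
      norm x0 \<le> Rb \<Longrightarrow> (\<Sum>i<k. Ts i) \<le> 2 * \<tau> \<Longrightarrow>
      norm (dt_sol Fa x0 Ts k)
        \<le> Kb * norm x0 * exp (- lam * (\<Sum>i<k. Ts i)) + 1 / (4 * Kb) * (Kb * norm x0)"
    by blast
  have "norm (dt_sol Fa x0 Ts k)
      \<le> 2 * (Kb + 1) * norm x0 * exp (- (ln 2 / (2 * \<tau>)) * (\<Sum>i<k. Ts i))"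
    if Ts: "Ts \<in> Phi (min T \<tau>)" and "norm x0 \<le> Rb" for k Ts and x0 :: "real^'n"
  proof -
    have pos: "\<And>i. 0 < Ts i" and short: "\<And>i. Ts i < \<tau>" and "Ts \<in> Phi T"
      using Ts by (auto simp: Phi_def)
    have restart: "norm (dt_sol Fa x0 Ts (m + j)) \<le> Kb * norm (dt_sol Fa x0 Ts m)
        * exp (- lam * (\<Sum>i<j. Ts (m + i))) + norm (dt_sol Fa x0 Ts m) / 4"
      if "norm (dt_sol Fa x0 Ts m) \<le> Rb" "(\<Sum>i<j. Ts (m + i)) \<le> 2 * \<tau>" for m j
      using window[OF Phi_shift[OF \<open>Ts \<in> Phi T\<close>] that] Kb by (simp add: dt_sol_add)
    have "norm (dt_sol Fa x0 Ts k) \<le> 2 * (Kb + 1) * norm (dt_sol Fa x0 Ts 0)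
        * exp (- (ln 2 / (2 * \<tau>)) * (\<Sum>i<k. Ts i))"
      by (rule exp_bound_from_windows[where x = "dt_sol Fa x0 Ts" and r = Rb, OF pos short])
        (use restart Kb lam decay \<open>norm x0 \<le> Rb\<close> in auto)
    then show ?thesis
      by simp
  qed
  moreover have "0 < min T \<tau>" "0 < ln 2 / (2 * \<tau>)" "1 \<le> 2 * (Kb + 1)"
    using \<open>0 < T\<close> \<tau> Kb by auto
  ultimately show ?thesis
    unfolding LES_VSR_def using \<open>0 < Rb\<close> by (metis minus_mult_left)
qed

theorem theorem1:
  fixes Fa Fb :: "real^'n \<Rightarrow> real \<Rightarrow> real^'n"
  assumes "EPC Fa Fb"
  shows "(SPS_VSR Fa \<longleftrightarrow> SPS_VSR Fb) \<and> (LES_VSR Fa \<longleftrightarrow> LES_VSR Fb)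
         \<and> (SLES_VSR Fa \<longleftrightarrow> SLES_VSR Fb)"
proof -
  have "EPC Fb Fa"
    using EPC_sym[OF assms] .
  then have "SPS_VSR Fa \<longleftrightarrow> SPS_VSR Fb" and "LES_VSR Fa \<longleftrightarrow> LES_VSR Fb"
    using assms SPS_VSR_transfer LES_VSR_transfer by blast+
  then show ?thesis
    by (simp add: SLES_VSR_def)
qed

end
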